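(* Let $k\ge1$, $t\ge0$ and $n\ge k+t$ be integers, and let $F$ be a monotone $t$-admissible $k$-CNF formula on $n$ variables with $|\mathrm{sat}_t(F)|=S(n,t,k)$. Suppose no clause of $F$ is redundant, i.e. removing any single clause from $F$ yields a formula that is not $t$-admissible. Then every clause of $F$ has width exactly $k$.
   Context: A $k$-CNF formula is a conjunction of clauses (disjunctions of literals) each of width (number of literals) at most $k$; it is monotone if no literal is negated. $\mathrm{sat}_t(F)$ is the set of satisfying assignments of Hamming weight exactly $t$; $F$ is $t$-admissible if it has no satisfying assignment of Hamming weight less than $t$; $S(n,t,k)$ is the maximum of $|\mathrm{sat}_t(F)|$ over all $t$-admissible $k$-CNF formulas $F$ on $n$ variables. *)

theory Defs
  imports Main
begin

text \<open>Variables are natural numbers; a formula on n variables uses variables 0..n-1.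
A literal is a pair (v, b): b = True means the positive literal x_v, b = False means its negation.
An assignment is identified with the set of variables it sets to true;
its Hamming weight is the cardinality of that set.\<close>

type_synonym literal = "nat \<times> bool"
type_synonym clause = "literal set"
type_synonym cnf = "clause set"

definition width :: "clause \<Rightarrow> nat" where
  "width C = card C"

definition clause_sat :: "nat set \<Rightarrow> clause \<Rightarrow> bool" where
  "clause_sat A C \<longleftrightarrow> (\<exists>(v, b) \<in> C. (v \<in> A) = b)"

definition cnf_sat :: "nat set \<Rightarrow> cnf \<Rightarrow> bool" where
  "cnf_sat A F \<longleftrightarrow> (\<forall>C \<in> F. clause_sat A C)"

definition is_kCNF :: "nat \<Rightarrow> nat \<Rightarrow> cnf \<Rightarrow> bool" where
  "is_kCNF n k F \<longleftrightarrow> finite F \<and>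
     (\<forall>C \<in> F. finite C \<and> width C \<le> k \<and> (\<forall>(v, b) \<in> C. v < n))"

definition monotone_cnf :: "cnf \<Rightarrow> bool" where
  "monotone_cnf F \<longleftrightarrow> (\<forall>C \<in> F. \<forall>(v, b) \<in> C. b)"

definition sat_t :: "nat \<Rightarrow> nat \<Rightarrow> cnf \<Rightarrow> nat set set" where
  "sat_t n t F = {A. A \<subseteq> {0..<n} \<and> card A = t \<and> cnf_sat A F}"

definition admissible :: "nat \<Rightarrow> nat \<Rightarrow> cnf \<Rightarrow> bool" where
  "admissible n t F \<longleftrightarrow> (\<forall>A. A \<subseteq> {0..<n} \<and> card A < t \<longrightarrow> \<not> cnf_sat A F)"

definition S :: "nat \<Rightarrow> nat \<Rightarrow> nat \<Rightarrow> nat" where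
  "S n t k = Max {card (sat_t n t F) | F. is_kCNF n k F \<and> admissible n t F}"

end

theory Submission
  imports Defs
begin

text \<open>Suppose a clause C has width below k. Irredundancy of C yields an assignment A of weight
below t satisfying every other clause but not C; since F is monotone, A avoids the variables
of C, so A extends to an assignment Y of weight exactly t that still avoids them. Replacing C
by the clauses C \<union> {y}, y \<in> Y, keeps the width at most k and keeps t-admissibility (an
assignment falsifying C must now contain all of Y), loses no old weight-t solution and gains Y.
This contradicts the maximality of F.\<close>

lemma finite_sat_t: "finite (sat_t n t F)"
  by (rule finite_subset[of _ "Pow {0..<n}"]) (auto simp: sat_t_def)

lemma card_sat_t_le_S:
  assumes "is_kCNF n k F" and "admissible n t F"
  shows "card (sat_t n t F) \<le> S n t k"
proof -
  let ?M = "{card (sat_t n t G) | G. is_kCNF n k G \<and> admissible n t G}"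
  have "?M \<subseteq> {..card (Pow {0..<n})}"
    by (auto intro!: card_mono simp: sat_t_def)
  then have "finite ?M"
    using finite_subset by blast
  moreover have "card (sat_t n t F) \<in> ?M"
    using assms by blast
  ultimately show ?thesis
    unfolding S_def by simp
qed

lemma clause_sat_positive_iff:
  assumes "\<forall>(v, b) \<in> C. b"
  shows "clause_sat A C \<longleftrightarrow> A \<inter> fst ` C \<noteq> {}"
  using assms unfolding clause_sat_def by force

lemma cnf_sat_monotone_mono:
  assumes "monotone_cnf F" and "cnf_sat A F" and "A \<subseteq> B"
  shows "cnf_sat B F"
  using assms unfolding monotone_cnf_def cnf_sat_def clause_sat_def by fast

lemma obtain_superset_avoiding:
  assumes "A \<subseteq> {0..<n}" and "A \<inter> V = {}" and "finite V"
    and "card A \<le> t" and "card V + t \<le> n"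
  obtains Y where "A \<subseteq> Y" and "Y \<subseteq> {0..<n} - V" and "card Y = t"
proof -
  let ?R = "{0..<n} - V - A"
  have finA: "finite A"
    using assms(1) finite_subset by blast
  have "n - card (V \<union> A) \<le> card ?R"
    using diff_card_le_card_Diff[of "V \<union> A" "{0..<n}"] assms(3) finA
    by (simp add: Diff_Un set_diff_eq Diff_Int_distrib)
  moreover have "card (V \<union> A) \<le> card V + card A"
    by (rule card_Un_le)
  ultimately have "t - card A \<le> card ?R"
    using assms(4,5) by linarith
  then obtain T where T: "T \<subseteq> ?R" "card T = t - card A" "finite T"
    by (rule obtain_subset_with_card_n)
  have "card (A \<union> T) = t"
    using card_Un_disjoint[OF finA T(3)] T(1,2) assms(4) by auto
  then show thesis
    using that[of "A \<union> T"] assms(1,2) T(1) by blast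
qed

definition widen_clause :: "clause \<Rightarrow> nat set \<Rightarrow> cnf \<Rightarrow> cnf" where
  "widen_clause C Y F = (F - {C}) \<union> (\<lambda>y. insert (y, True) C) ` Y"

lemma is_kCNF_widen_clause:
  assumes "is_kCNF n k F" and "C \<in> F" and "width C < k" and "Y \<subseteq> {0..<n}"
  shows "is_kCNF n k (widen_clause C Y F)"
proof -
  have "finite Y"
    using assms(4) finite_subset by blast
  moreover have "finite C" and "\<forall>(v, b) \<in> C. v < n"
    using assms(1,2) unfolding is_kCNF_def by auto
  moreover have "card (insert (y, True) C) \<le> k" for y
    using assms(3) \<open>finite C\<close> unfolding width_def by (simp add: card_insert_if)
  ultimately show ?thesis
    using assms(1,4) unfolding is_kCNF_def widen_clause_def width_def by auto
qed

lemma clause_sat_subset: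
  assumes "clause_sat A C" and "C \<subseteq> D"
  shows "clause_sat A D"
  using assms unfolding clause_sat_def by blast

lemma cnf_sat_widen_clause:
  assumes "cnf_sat A F" and "C \<in> F"
  shows "cnf_sat A (widen_clause C Y F)"
  using assms clause_sat_subset[of A C "insert _ C"]
  unfolding widen_clause_def cnf_sat_def by blast

lemma cnf_sat_widen_clause_self:
  assumes "cnf_sat Y (F - {C})"
  shows "cnf_sat Y (widen_clause C Y F)"
  using assms unfolding widen_clause_def cnf_sat_def clause_sat_def by auto

lemma admissible_widen_clause:
  assumes "admissible n t F" and "t \<le> card Y" and "finite Y"
  shows "admissible n t (widen_clause C Y F)"
  unfolding admissible_def
proof (intro allI impI notI)
  fix B
  assume B: "B \<subseteq> {0..<n} \<and> card B < t" and sat: "cnf_sat B (widen_clause C Y F)"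
  have "\<not> clause_sat B C"
  proof
    assume "clause_sat B C"
    with sat have "cnf_sat B F"
      unfolding widen_clause_def cnf_sat_def by auto
    with B assms(1) show False
      unfolding admissible_def by blast
  qed
  moreover have "clause_sat B (insert (y, True) C)" if "y \<in> Y" for y
    using sat that unfolding widen_clause_def cnf_sat_def by auto
  ultimately have "Y \<subseteq> B"
    unfolding clause_sat_def by auto
  then have "card Y \<le> card B"
    using B finite_subset card_mono by blast
  with B assms(2) show False
    by simp
qed

lemma obtain_irredundancy_witness:
  assumes "monotone_cnf F" and "admissible n t F" and "C \<in> F"
    and "\<not> admissible n t (F - {C})"
  obtains A where "A \<subseteq> {0..<n}" and "card A < t" and "cnf_sat A (F - {C})"
    and "A \<inter> fst ` C = {}"
proof -
  obtain A where A: "A \<subseteq> {0..<n}" "card A < t" "cnf_sat A (F - {C})"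
    using assms(4) unfolding admissible_def by blast
  have "\<not> clause_sat A C"
    using A assms(2) unfolding admissible_def cnf_sat_def by blast
  moreover have "\<forall>(v, b) \<in> C. b"
    using assms(1,3) unfolding monotone_cnf_def by blast
  ultimately have "A \<inter> fst ` C = {}"
    using clause_sat_positive_iff by blast
  with A show thesis
    by (rule that)
qed

lemma sat_t_psubset_widen_clause:
  assumes "monotone_cnf F" and "C \<in> F" and "cnf_sat A (F - {C})" and "A \<subseteq> Y"
    and "Y \<subseteq> {0..<n} - fst ` C" and "card Y = t"
  shows "sat_t n t F \<subset> sat_t n t (widen_clause C Y F)"
proof -
  have "\<forall>(v, b) \<in> C. b"
    using assms(1,2) unfolding monotone_cnf_def by blast
  moreover have "Y \<inter> fst ` C = {}"
    using assms(5) by blast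
  ultimately have "\<not> clause_sat Y C"
    by (simp add: clause_sat_positive_iff)
  then have "Y \<notin> sat_t n t F"
    using assms(2) unfolding sat_t_def cnf_sat_def by blast
  moreover have "monotone_cnf (F - {C})"
    using assms(1) unfolding monotone_cnf_def by blast
  then have "cnf_sat Y (widen_clause C Y F)"
    using cnf_sat_widen_clause_self cnf_sat_monotone_mono assms(3,4) by blast
  then have "Y \<in> sat_t n t (widen_clause C Y F)"
    using assms(5,6) unfolding sat_t_def by blast
  moreover have "sat_t n t F \<subseteq> sat_t n t (widen_clause C Y F)"
    unfolding sat_t_def using cnf_sat_widen_clause assms(2) by blast
  ultimately show ?thesis
    by blast
qed

theorem lemma6:
  fixes n t k :: nat and F :: cnf
  assumes "k \<ge> 1" and "n \<ge> k + t"
    and "is_kCNF n k F" and "monotone_cnf F" and "admissible n t F"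
    and "card (sat_t n t F) = S n t k"
    and "\<forall>C \<in> F. \<not> admissible n t (F - {C})"
  shows "\<forall>C \<in> F. width C = k"
proof (rule ccontr)
  assume "\<not> (\<forall>C \<in> F. width C = k)"
  then obtain C where C: "C \<in> F" "width C < k"
    using assms(3) unfolding is_kCNF_def by fastforce
  have finC: "finite C"
    using assms(3) C(1) unfolding is_kCNF_def by blast
  obtain A where A: "A \<subseteq> {0..<n}" "card A < t" "cnf_sat A (F - {C})" "A \<inter> fst ` C = {}"
    using obtain_irredundancy_witness[OF assms(4,5) C(1)] assms(7) C(1) by blast
  have room: "card (fst ` C) + t \<le> n"
    using card_image_le[OF finC, of fst] C(2) assms(2) unfolding width_def by linarith
  obtain Y where Y: "A \<subseteq> Y" "Y \<subseteq> {0..<n} - fst ` C" "card Y = t"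
    by (rule obtain_superset_avoiding[OF A(1,4) finite_imageI[OF finC] less_imp_le[OF A(2)] room])
  have Ysub: "Y \<subseteq> {0..<n}" and finY: "finite Y"
    using Y(2) finite_subset[of Y "{0..<n}"] by auto
  have "card (sat_t n t F) < card (sat_t n t (widen_clause C Y F))"
    by (rule psubset_card_mono[OF finite_sat_t sat_t_psubset_widen_clause[OF assms(4) C(1) A(3) Y]])
  moreover have "card (sat_t n t (widen_clause C Y F)) \<le> S n t k"
    using is_kCNF_widen_clause[OF assms(3) C Ysub] admissible_widen_clause[OF assms(5) _ finY] Y(3)
    by (intro card_sat_t_le_S) auto
  ultimately show False
    using assms(6) by simp
qed

end
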